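(* Let $a,b$ be integers, let $G\in\mathscr{G}_{a,b}$, and let $P=u_0u_1\ldots u_k$ be an internal path or an internal cycle in $G$. Then: (i) $k\le 3$; (ii) if $k=3$, then there is no internal path $v_0v_1v_2$ of length $2$ in $G$ with $d_G(v_0)=d_G(v_2)=d_G(u_0)$; (iii) if $k=3$, then $d_G(u_0)=d_G(u_3)$; moreover, if $G$ contains another internal path $v_0v_1v_2v_3$, then $d_G(v_0)=d_G(v_3)=d_G(u_0)=d_G(u_3)$.
   Context: All graphs are simple and connected; $d_G(v)$ is the degree of $v$ and $N_G(v)$ its neighbourhood. For integers $a,b$, $\mathscr{G}_{a,b}$ is the set of connected graphs $G$ such that for every $v\in V_G$, $\sum_{u\in N_G(v)}d_G(u)=a\,d_G(v)+b-d_G(v)^2$. A path $u_0u_1\ldots u_k$ ($k\ge1$) in $G$ with $d_G(u_0),d_G(u_k)\ge 3$ and $d_G(u_i)=2$ for $1\le i\le k-1$ is called an internal path if $u_0\ne u_k$, and an internal cycle if $u_0=u_k$ (then $k\ge 3$). *)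

theory Defs
  imports Main
begin

definition simple_conn_graph :: "'a set \<Rightarrow> ('a \<Rightarrow> 'a \<Rightarrow> bool) \<Rightarrow> bool" where
  "simple_conn_graph V E \<longleftrightarrow> finite V \<and> V \<noteq> {} \<and>
     (\<forall>x y. E x y \<longrightarrow> x \<in> V \<and> y \<in> V) \<and>
     (\<forall>x y. E x y \<longrightarrow> E y x) \<and> (\<forall>x. \<not> E x x) \<and>
     (\<forall>x\<in>V. \<forall>y\<in>V. E\<^sup>*\<^sup>* x y)"

definition nbhd :: "'a set \<Rightarrow> ('a \<Rightarrow> 'a \<Rightarrow> bool) \<Rightarrow> 'a \<Rightarrow> 'a set" where
  "nbhd V E v = {u \<in> V. E v u}"

definition deg :: "'a set \<Rightarrow> ('a \<Rightarrow> 'a \<Rightarrow> bool) \<Rightarrow> 'a \<Rightarrow> nat" where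
  "deg V E v = card (nbhd V E v)"

definition in_G_ab :: "int \<Rightarrow> int \<Rightarrow> 'a set \<Rightarrow> ('a \<Rightarrow> 'a \<Rightarrow> bool) \<Rightarrow> bool" where
  "in_G_ab a b V E \<longleftrightarrow> simple_conn_graph V E \<and>
     (\<forall>v\<in>V. (\<Sum>u\<in>nbhd V E v. int (deg V E u))
              = a * int (deg V E v) + b - int (deg V E v) ^ 2)"

definition internal_walk :: "'a set \<Rightarrow> ('a \<Rightarrow> 'a \<Rightarrow> bool) \<Rightarrow> (nat \<Rightarrow> 'a) \<Rightarrow> nat \<Rightarrow> bool" where
  "internal_walk V E u k \<longleftrightarrow> 1 \<le> k \<and> (\<forall>i\<le>k. u i \<in> V) \<and> (\<forall>i<k. E (u i) (u (Suc i))) \<and>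
     deg V E (u 0) \<ge> 3 \<and> deg V E (u k) \<ge> 3 \<and> (\<forall>i. 1 \<le> i \<and> i < k \<longrightarrow> deg V E (u i) = 2)"

definition internal_path :: "'a set \<Rightarrow> ('a \<Rightarrow> 'a \<Rightarrow> bool) \<Rightarrow> (nat \<Rightarrow> 'a) \<Rightarrow> nat \<Rightarrow> bool" where
  "internal_path V E u k \<longleftrightarrow> internal_walk V E u k \<and> inj_on u {0..k}"

definition internal_cycle :: "'a set \<Rightarrow> ('a \<Rightarrow> 'a \<Rightarrow> bool) \<Rightarrow> (nat \<Rightarrow> 'a) \<Rightarrow> nat \<Rightarrow> bool" where
  "internal_cycle V E u k \<longleftrightarrow> internal_walk V E u k \<and> 3 \<le> k \<and> u 0 = u k \<and> inj_on u {0..<k}"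

end

theory Submission
  imports Defs
begin

text \<open>The defining identity of G_{a,b} at a vertex of degree 2 says that its two neighbours
  have degree sum \<open>2a + b - 4\<close>. Along an internal path or cycle every vertex two steps
  apart from another is a neighbour of the same degree-2 vertex, so consecutive such sums
  pin down the degrees: with \<open>k \<ge> 4\<close> the end \<open>u\<^sub>0\<close> would get degree 2, and with \<open>k = 3\<close>
  both ends get degree \<open>2a + b - 6\<close>, which is incompatible with an internal path of length 2
  between two vertices of that degree.\<close>

lemma in_G_ab_sym: "in_G_ab a b V E \<Longrightarrow> E x y \<Longrightarrow> E y x"
  unfolding in_G_ab_def simple_conn_graph_def by blast

lemma in_G_ab_in_V: "in_G_ab a b V E \<Longrightarrow> E x y \<Longrightarrow> y \<in> V"
  unfolding in_G_ab_def simple_conn_graph_def by blast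

lemma nbhd_eq_doubleton:
  assumes "finite V" "deg V E v = 2" "x \<in> nbhd V E v" "y \<in> nbhd V E v" "x \<noteq> y"
  shows "nbhd V E v = {x, y}"
proof -
  have "finite (nbhd V E v)" using \<open>finite V\<close> unfolding nbhd_def by simp
  moreover have "card {x, y} = card (nbhd V E v)" using assms(2,5) unfolding deg_def by simp
  ultimately show ?thesis using card_subset_eq assms(3,4) by (metis empty_subsetI insert_subset)
qed

lemma in_G_ab_deg2_neighbours:
  assumes G: "in_G_ab a b V E" and "v \<in> V" "deg V E v = 2" "E v x" "E v y" "x \<noteq> y"
  shows "int (deg V E x) + int (deg V E y) = 2 * a + b - 4"
proof -
  have "finite V" using G unfolding in_G_ab_def simple_conn_graph_def by blast
  moreover have "x \<in> nbhd V E v" "y \<in> nbhd V E v"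
    using assms(4,5) in_G_ab_in_V[OF G] unfolding nbhd_def by simp_all
  ultimately have "nbhd V E v = {x, y}" by (rule nbhd_eq_doubleton[OF _ assms(3) _ _ assms(6)])
  moreover have "(\<Sum>w\<in>nbhd V E v. int (deg V E w)) = a * int (deg V E v) + b - int (deg V E v) ^ 2"
    using G assms(2) unfolding in_G_ab_def by blast
  ultimately show ?thesis using assms(3,6) by simp
qed

lemma internal_walk_skip_deg_sum:
  assumes G: "in_G_ab a b V E" and W: "internal_walk V E u k"
    and "Suc (Suc i) \<le> k" "u i \<noteq> u (Suc (Suc i))"
  shows "int (deg V E (u i)) + int (deg V E (u (Suc (Suc i)))) = 2 * a + b - 4"
proof (rule in_G_ab_deg2_neighbours[OF G])
  show "u (Suc i) \<in> V" "deg V E (u (Suc i)) = 2"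
    "E (u (Suc i)) (u i)" "E (u (Suc i)) (u (Suc (Suc i)))"
    using W assms(3) in_G_ab_sym[OF G] unfolding internal_walk_def by auto
qed fact

lemma internal_path_or_cycle_skip_distinct:
  assumes P: "internal_path V E u k \<or> internal_cycle V E u k" and i: "Suc (Suc i) \<le> k"
  shows "u i \<noteq> u (Suc (Suc i))"
  using P
proof
  assume "internal_path V E u k"
  then have "inj_on u {0..k}" unfolding internal_path_def by blast
  then show ?thesis by (rule inj_on_contraD) (use i in auto)
next
  assume "internal_cycle V E u k"
  then have inj: "inj_on u {0..<k}" and "3 \<le> k" "u 0 = u k"
    unfolding internal_cycle_def by blast+
  show ?thesis
  proof (cases "Suc (Suc i) = k")
    case True
    with \<open>3 \<le> k\<close> have "u i \<noteq> u 0" by (intro inj_on_contraD[OF inj]) auto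
    with True \<open>u 0 = u k\<close> show ?thesis by simp
  next
    case False
    with i show ?thesis by (intro inj_on_contraD[OF inj]) auto
  qed
qed

lemma internal_path_or_cycle_length_le_3:
  assumes G: "in_G_ab a b V E" and P: "internal_path V E u k \<or> internal_cycle V E u k"
  shows "k \<le> 3"
proof (rule ccontr)
  assume "\<not> k \<le> 3"
  have W: "internal_walk V E u k"
    using P unfolding internal_path_def internal_cycle_def by blast
  have "int (deg V E (u 0)) + int (deg V E (u 2)) = 2 * a + b - 4"
    "int (deg V E (u 1)) + int (deg V E (u 3)) = 2 * a + b - 4"
    using internal_walk_skip_deg_sum[OF G W] internal_path_or_cycle_skip_distinct[OF P]
      \<open>\<not> k \<le> 3\<close> by (simp_all add: numeral_2_eq_2 numeral_3_eq_3)
  moreover have "deg V E (u i) = 2" if "i \<in> {1, 2, 3}" for i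
    using W \<open>\<not> k \<le> 3\<close> that unfolding internal_walk_def by auto
  moreover have "deg V E (u 0) \<ge> 3" using W unfolding internal_walk_def by blast
  ultimately show False by simp
qed

lemma internal_length_3_end_degrees:
  assumes G: "in_G_ab a b V E" and P: "internal_path V E u 3 \<or> internal_cycle V E u 3"
  shows "int (deg V E (u 0)) = 2 * a + b - 6" "int (deg V E (u 3)) = 2 * a + b - 6"
proof -
  have W: "internal_walk V E u 3"
    using P unfolding internal_path_def internal_cycle_def by blast
  have "int (deg V E (u 0)) + int (deg V E (u 2)) = 2 * a + b - 4"
    "int (deg V E (u 1)) + int (deg V E (u 3)) = 2 * a + b - 4"
    using internal_walk_skip_deg_sum[OF G W] internal_path_or_cycle_skip_distinct[OF P]
    by (simp_all add: numeral_2_eq_2 numeral_3_eq_3)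
  moreover have "deg V E (u 1) = 2" "deg V E (u 2) = 2"
    using W unfolding internal_walk_def by auto
  ultimately show "int (deg V E (u 0)) = 2 * a + b - 6" "int (deg V E (u 3)) = 2 * a + b - 6"
    by simp_all
qed

lemma internal_path_2_end_deg_sum:
  assumes G: "in_G_ab a b V E" and P: "internal_path V E v 2"
  shows "int (deg V E (v 0)) + int (deg V E (v 2)) = 2 * a + b - 4"
  using internal_walk_skip_deg_sum[OF G, of v 2 0] internal_path_or_cycle_skip_distinct[of V E v 2 0] P
  unfolding internal_path_def by (simp add: numeral_2_eq_2)

theorem lemma1p6:
  fixes a b :: int and V :: "'a set" and E :: "'a \<Rightarrow> 'a \<Rightarrow> bool"
    and u :: "nat \<Rightarrow> 'a" and k :: nat
  assumes G: "in_G_ab a b V E"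
    and P: "internal_path V E u k \<or> internal_cycle V E u k"
  shows "k \<le> 3 \<and>
    (k = 3 \<longrightarrow> \<not> (\<exists>v. internal_path V E v 2 \<and>
            deg V E (v 0) = deg V E (u 0) \<and> deg V E (v 2) = deg V E (u 0))) \<and>
    (k = 3 \<longrightarrow> deg V E (u 0) = deg V E (u 3) \<and>
       (\<forall>v. internal_path V E v 3 \<longrightarrow>
           deg V E (v 0) = deg V E (v 3) \<and> deg V E (v 3) = deg V E (u 0)))"
proof (intro conjI impI)
  show "k \<le> 3" using internal_path_or_cycle_length_le_3[OF G P] .
next
  assume "k = 3"
  then have u0: "int (deg V E (u 0)) = 2 * a + b - 6" and u3: "int (deg V E (u 3)) = 2 * a + b - 6"
    using internal_length_3_end_degrees[OF G] P by blast+
  show "deg V E (u 0) = deg V E (u 3)" using u0 u3 by simp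
  show "\<not> (\<exists>v. internal_path V E v 2 \<and>
            deg V E (v 0) = deg V E (u 0) \<and> deg V E (v 2) = deg V E (u 0))"
  proof
    assume "\<exists>v. internal_path V E v 2 \<and>
            deg V E (v 0) = deg V E (u 0) \<and> deg V E (v 2) = deg V E (u 0)"
    then obtain v where v: "internal_path V E v 2"
      and "deg V E (v 0) = deg V E (u 0)" "deg V E (v 2) = deg V E (u 0)" by blast
    with internal_path_2_end_deg_sum[OF G v] have "2 * int (deg V E (u 0)) = 2 * a + b - 4"
      by simp
    with u0 have "deg V E (u 0) = 2" by simp
    moreover have "deg V E (u 0) \<ge> 3"
      using P unfolding internal_path_def internal_cycle_def internal_walk_def by (elim disjE conjE)
    ultimately show False by simp
  qed
  show "\<forall>v. internal_path V E v 3 \<longrightarrow>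
           deg V E (v 0) = deg V E (v 3) \<and> deg V E (v 3) = deg V E (u 0)"
  proof (intro allI impI)
    fix v assume "internal_path V E v 3"
    then have "int (deg V E (v 0)) = 2 * a + b - 6" "int (deg V E (v 3)) = 2 * a + b - 6"
      using internal_length_3_end_degrees[OF G] by blast+
    with u0 show "deg V E (v 0) = deg V E (v 3) \<and> deg V E (v 3) = deg V E (u 0)" by simp
  qed
qed

end
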